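(* Let $\mathbf{A}=(a_{ij})$ be a table with a proper row partition $(R_1,\dots,R_k)$ and a proper column partition $(C_1,\dots,C_k)$, and assume that there are numbers $c_{ab}>0$ ($1\le a,b\le k$) such that $a_{ij}=c_{ab}$ for all $1\le a,b\le k$, $i\in R_a$, $j\in C_b$. Then \[ 0={\mathrm{disc}}_k(\mathbf{A})={\mathrm{disc}}_{k+1}(\mathbf{A})=\cdots={\mathrm{disc}}_{\mathrm{rank}\,\mathbf{A}}(\mathbf{A}). \]
   Context: Standing assumptions: $\mathbf{A}$ is an $m\times n$ array of nonnegative entries whose total sum is $1$, and $\mathbf{A}$ is non-decomposable ($\mathbf{A}\mathbf{A}^T$ if $m\le n$, or $\mathbf{A}^T\mathbf{A}$ if $m>n$, is irreducible); in particular all row sums $d_{row,i}=\sum_j a_{ij}$ and column sums $d_{col,j}=\sum_i a_{ij}$ are positive. Let $R$ be the row set and $C$ the column set. For $X\subset R$, $Y\subset C$: ${\mathrm{Vol}}(X)=\sum_{i\in X}d_{row,i}$, ${\mathrm{Vol}}(Y)=\sum_{j\in Y}d_{col,j}$, $a(X,Y)=\sum_{i\in X}\sum_{j\in Y}a_{ij}$, and for nonempty $X,Y$, $\rho(X,Y)=\frac{a(X,Y)}{{\mathrm{Vol}}(X){\mathrm{Vol}}(Y)}$. For a proper $\ell$-partition $R_1,\dots,R_\ell$ of $R$ and $C_1,\dots,C_\ell$ of $C$ (all parts nonempty), and nonempty $X\subset R_a$, $Y\subset C_b$, ${\mathrm{disc}}(X,Y;R_a,C_b)=|\rho(X,Y)-\rho(R_a,C_b)|\sqrt{{\mathrm{Vol}}(X){\mathrm{Vol}}(Y)}$;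 ${\mathrm{disc}}(\mathbf{A};R_1,\dots,R_\ell,C_1,\dots,C_\ell)=\max_{1\le a,b\le \ell}\max_{X\subset R_a,\,Y\subset C_b}{\mathrm{disc}}(X,Y;R_a,C_b)$; and ${\mathrm{disc}}_\ell(\mathbf{A})$ is the minimum of this quantity over all proper $\ell$-partitions of the rows and of the columns. *)

theory Defs
  imports Complex_Main "Jordan_Normal_Form.DL_Rank"
begin

text \<open>An m x n table A is a function nat => nat => real; rows are {0..<m}, columns {0..<n}.\<close>

definition rowsum :: "(nat \<Rightarrow> nat \<Rightarrow> real) \<Rightarrow> nat \<Rightarrow> nat \<Rightarrow> real" where
  "rowsum A n i = (\<Sum>j<n. A i j)"

definition colsum :: "(nat \<Rightarrow> nat \<Rightarrow> real) \<Rightarrow> nat \<Rightarrow> nat \<Rightarrow> real" where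
  "colsum A m j = (\<Sum>i<m. A i j)"

definition VolR :: "(nat \<Rightarrow> nat \<Rightarrow> real) \<Rightarrow> nat \<Rightarrow> nat set \<Rightarrow> real" where
  "VolR A n X = (\<Sum>i\<in>X. rowsum A n i)"

definition VolC :: "(nat \<Rightarrow> nat \<Rightarrow> real) \<Rightarrow> nat \<Rightarrow> nat set \<Rightarrow> real" where
  "VolC A m Y = (\<Sum>j\<in>Y. colsum A m j)"

definition aXY :: "(nat \<Rightarrow> nat \<Rightarrow> real) \<Rightarrow> nat set \<Rightarrow> nat set \<Rightarrow> real" where
  "aXY A X Y = (\<Sum>i\<in>X. \<Sum>j\<in>Y. A i j)"

definition rho :: "(nat \<Rightarrow> nat \<Rightarrow> real) \<Rightarrow> nat \<Rightarrow> nat \<Rightarrow> nat set \<Rightarrow> nat set \<Rightarrow> real" where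
  "rho A m n X Y = aXY A X Y / (VolR A n X * VolC A m Y)"

definition disc_pair :: "(nat \<Rightarrow> nat \<Rightarrow> real) \<Rightarrow> nat \<Rightarrow> nat \<Rightarrow> nat set \<Rightarrow> nat set \<Rightarrow> nat set \<Rightarrow> nat set \<Rightarrow> real" where
  "disc_pair A m n X Y Ra Cb =
     \<bar>rho A m n X Y - rho A m n Ra Cb\<bar> * sqrt (VolR A n X * VolC A m Y)"

text \<open>A proper l-partition of {0..<N}: parts P 0, ..., P (l-1), nonempty, pairwise disjoint,
  covering {0..<N}; by convention P a = {} for a >= l (so that the set of partitions is finite).\<close>
definition proper_partition :: "nat \<Rightarrow> nat \<Rightarrow> (nat \<Rightarrow> nat set) \<Rightarrow> bool" where
  "proper_partition N l P \<longleftrightarrow>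
     (\<forall>a<l. P a \<noteq> {}) \<and>
     (\<forall>a<l. \<forall>b<l. a \<noteq> b \<longrightarrow> P a \<inter> P b = {}) \<and>
     (\<Union>a<l. P a) = {0..<N} \<and>
     (\<forall>a\<ge>l. P a = {})"

definition disc_part :: "(nat \<Rightarrow> nat \<Rightarrow> real) \<Rightarrow> nat \<Rightarrow> nat \<Rightarrow> nat \<Rightarrow> (nat \<Rightarrow> nat set) \<Rightarrow> (nat \<Rightarrow> nat set) \<Rightarrow> real" where
  "disc_part A m n l R C =
     Max {disc_pair A m n X Y (R a) (C b) | a b X Y.
            a < l \<and> b < l \<and> X \<subseteq> R a \<and> X \<noteq> {} \<and> Y \<subseteq> C b \<and> Y \<noteq> {}}"

definition disc_l :: "nat \<Rightarrow> (nat \<Rightarrow> nat \<Rightarrow> real) \<Rightarrow> nat \<Rightarrow> nat \<Rightarrow> real" where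
  "disc_l l A m n =
     Min {disc_part A m n l R C | R C. proper_partition m l R \<and> proper_partition n l C}"

definition irreducible_mat :: "nat \<Rightarrow> (nat \<Rightarrow> nat \<Rightarrow> real) \<Rightarrow> bool" where
  "irreducible_mat N M \<longleftrightarrow>
     (\<forall>i<N. \<forall>j<N. (i, j) \<in> {(p, q). p < N \<and> q < N \<and> M p q \<noteq> 0}\<^sup>+)"

definition non_decomposable :: "(nat \<Rightarrow> nat \<Rightarrow> real) \<Rightarrow> nat \<Rightarrow> nat \<Rightarrow> bool" where
  "non_decomposable A m n \<longleftrightarrow>
     (if m \<le> n then irreducible_mat m (\<lambda>i i'. \<Sum>j<n. A i j * A i' j)
      else irreducible_mat n (\<lambda>j j'. \<Sum>i<m. A i j * A i j'))"

definition table_rank :: "(nat \<Rightarrow> nat \<Rightarrow> real) \<Rightarrow> nat \<Rightarrow> nat \<Rightarrow> nat" where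
  "table_rank A m n = vec_space.rank m (mat m n (\<lambda>(i, j). A i j))"

end

theory Submission
  imports Defs
begin

text \<open>On a table that is constant on the blocks \<open>R a \<times> C b\<close>, all rows of a block \<open>R a\<close> have
  the same row sum and all columns of \<open>C b\<close> the same column sum.  Hence for nonempty
  \<open>X \<subseteq> R a\<close>, \<open>Y \<subseteq> C b\<close> the factors \<open>card X\<close> and \<open>card Y\<close> cancel in \<open>\<rho>(X,Y)\<close>, so
  \<open>\<rho>(X,Y) = \<rho>(R a, C b)\<close>: every discrepancy of the block partition vanishes and
  \<open>disc\<^sub>k(A) = 0\<close>.  The table has at most \<open>k\<close> distinct columns, so its rank is at most \<open>k\<close> and
  the chain \<open>k \<le> l \<le> rank A\<close> collapses to \<open>l = k\<close>.\<close>

lemma (in vec_space) rank_le_card_cols: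
  assumes "A \<in> carrier_mat n nc"
  shows "rank A \<le> card (set (cols A))"
proof -
  obtain S where max: "maximal S (\<lambda>T. T \<subseteq> set (cols A) \<and> lin_indpt T)"
    using maximal_exists[of "\<lambda>T. T \<subseteq> set (cols A) \<and> lin_indpt T" "card (set (cols A))" "{}"]
    by (meson List.finite_set card_mono empty_iff empty_subsetI finite_lin_indpt2 rev_finite_subset)
  then have "card S \<le> card (set (cols A))"
    by (simp add: card_mono maximal_def)
  then show ?thesis
    using rank_card_indpt[OF assms max] by simp
qed

lemma proper_partition_nonempty: "proper_partition N l P \<Longrightarrow> a < l \<Longrightarrow> P a \<noteq> {}"
  by (simp add: proper_partition_def)

lemma proper_partition_subset:
  assumes "proper_partition N l P"
  shows "P a \<subseteq> {0..<N}"
proof (cases "a < l")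
  case True
  then have "P a \<subseteq> (\<Union>a<l. P a)" by auto
  with assms show ?thesis by (simp add: proper_partition_def)
qed (use assms in \<open>simp add: proper_partition_def\<close>)

lemma proper_partition_covers:
  assumes "proper_partition N l P" "x < N"
  obtains a where "a < l" "x \<in> P a"
proof -
  have "x \<in> (\<Union>a<l. P a)" using assms by (simp add: proper_partition_def)
  then show ?thesis using that by auto
qed

lemma finite_proper_partitions: "finite {P. proper_partition N l P}"
proof -
  let ?extend = "\<lambda>f a. if a < l then f a else {}"
  have "{P. proper_partition N l P} \<subseteq> ?extend ` (PiE {..<l} (\<lambda>_. Pow {0..<N}))"
  proof
    fix P assume "P \<in> {P. proper_partition N l P}"
    then have P: "proper_partition N l P" by simp
    have "restrict P {..<l} \<in> PiE {..<l} (\<lambda>_. Pow {0..<N})"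
      using proper_partition_subset[OF P] by auto
    moreover have "P = ?extend (restrict P {..<l})"
      using P by (intro ext) (simp add: proper_partition_def not_less)
    ultimately show "P \<in> ?extend ` (PiE {..<l} (\<lambda>_. Pow {0..<N}))" by blast
  qed
  then show ?thesis
    by (rule finite_subset) (intro finite_imageI finite_PiE; simp)
qed

lemma disc_pair_nonneg:
  assumes "\<forall>i<m. \<forall>j<n. A i j \<ge> 0" "X \<subseteq> {0..<m}" "Y \<subseteq> {0..<n}"
  shows "disc_pair A m n X Y Ra Cb \<ge> 0"
proof -
  have "VolR A n X \<ge> 0"
    unfolding VolR_def rowsum_def using assms(1,2) by (intro sum_nonneg) auto
  moreover have "VolC A m Y \<ge> 0"
    unfolding VolC_def colsum_def using assms(1,3) by (intro sum_nonneg) auto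
  ultimately show ?thesis by (simp add: disc_pair_def)
qed

lemma disc_part_nonneg:
  assumes R: "proper_partition m l R" and C: "proper_partition n l C" and "l \<ge> 1"
    and nonneg: "\<forall>i<m. \<forall>j<n. A i j \<ge> 0"
  shows "disc_part A m n l R C \<ge> 0"
proof -
  let ?S = "{disc_pair A m n X Y (R a) (C b) | a b X Y.
            a < l \<and> b < l \<and> X \<subseteq> R a \<and> X \<noteq> {} \<and> Y \<subseteq> C b \<and> Y \<noteq> {}}"
  have "?S \<subseteq> (\<lambda>(a, b, X, Y). disc_pair A m n X Y (R a) (C b)) `
          ({..<l} \<times> {..<l} \<times> Pow {0..<m} \<times> Pow {0..<n})"
  proof
    fix x assume "x \<in> ?S"
    then obtain a b X Y where "x = disc_pair A m n X Y (R a) (C b)"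
      and "a < l" "b < l" "X \<subseteq> R a" "Y \<subseteq> C b"
      by blast
    then show "x \<in> (\<lambda>(a, b, X, Y). disc_pair A m n X Y (R a) (C b)) `
          ({..<l} \<times> {..<l} \<times> Pow {0..<m} \<times> Pow {0..<n})"
      using proper_partition_subset[OF R, of a] proper_partition_subset[OF C, of b]
      by (intro image_eqI[where x = "(a, b, X, Y)"]) auto
  qed
  then have "finite ?S" by (rule finite_subset) auto
  moreover have "disc_pair A m n (R 0) (C 0) (R 0) (C 0) \<in> ?S"
    using \<open>l \<ge> 1\<close> proper_partition_nonempty[OF R, of 0] proper_partition_nonempty[OF C, of 0]
    by (intro CollectI exI[of _ 0] exI[of _ "R 0"] exI[of _ "C 0"]) simp
  ultimately have "disc_pair A m n (R 0) (C 0) (R 0) (C 0) \<le> disc_part A m n l R C"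
    unfolding disc_part_def by (rule Max_ge)
  moreover have "disc_pair A m n (R 0) (C 0) (R 0) (C 0) \<ge> 0"
    by (rule disc_pair_nonneg[OF nonneg proper_partition_subset[OF R] proper_partition_subset[OF C]])
  ultimately show ?thesis by linarith
qed

lemma disc_l_eq_0I:
  assumes R: "proper_partition m l R" and C: "proper_partition n l C" and "l \<ge> 1"
    and "disc_part A m n l R C = 0" and nonneg: "\<forall>i<m. \<forall>j<n. A i j \<ge> 0"
  shows "disc_l l A m n = 0"
proof -
  let ?S = "{disc_part A m n l R C | R C. proper_partition m l R \<and> proper_partition n l C}"
  have "?S = (\<lambda>(R, C). disc_part A m n l R C) ` ({R. proper_partition m l R} \<times> {C. proper_partition n l C})"
    by auto
  then have "finite ?S" by (simp add: finite_proper_partitions)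
  then show ?thesis
    unfolding disc_l_def
  proof (rule Min_eqI)
    fix y assume "y \<in> ?S"
    then show "0 \<le> y" using disc_part_nonneg[OF _ _ \<open>l \<ge> 1\<close> nonneg] by blast
  next
    have "disc_part A m n l R C \<in> ?S" using R C by blast
    then show "0 \<in> ?S" using \<open>disc_part A m n l R C = 0\<close> by simp
  qed
qed

locale block_table =
  fixes A :: "nat \<Rightarrow> nat \<Rightarrow> real" and m n k :: nat
    and R C :: "nat \<Rightarrow> nat set" and c :: "nat \<Rightarrow> nat \<Rightarrow> real"
  assumes partR: "proper_partition m k R"
    and partC: "proper_partition n k C"
    and block: "\<forall>a<k. \<forall>b<k. \<forall>i\<in>R a. \<forall>j\<in>C b. A i j = c a b"
begin

lemma entry_eq:
  "a < k \<Longrightarrow> b < k \<Longrightarrow> i \<in> R a \<Longrightarrow> j \<in> C b \<Longrightarrow> A i j = c a b"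
  using block by blast

lemma rowsum_eq:
  assumes "a < k" "i \<in> R a" "i' \<in> R a"
  shows "rowsum A n i = rowsum A n i'"
  unfolding rowsum_def
proof (rule sum.cong[OF refl])
  fix j assume "j \<in> {..<n}"
  then obtain b where "b < k" "j \<in> C b" using proper_partition_covers[OF partC] by blast
  then show "A i j = A i' j" using entry_eq assms by metis
qed

lemma colsum_eq:
  assumes "b < k" "j \<in> C b" "j' \<in> C b"
  shows "colsum A m j = colsum A m j'"
  unfolding colsum_def
proof (rule sum.cong[OF refl])
  fix i assume "i \<in> {..<m}"
  then obtain a where "a < k" "i \<in> R a" using proper_partition_covers[OF partR] by blast
  then show "A i j = A i j'" using entry_eq assms by metis
qed

lemma rho_in_block:
  assumes "a < k" "b < k" "X \<subseteq> R a" "X \<noteq> {}" "Y \<subseteq> C b" "Y \<noteq> {}"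
    and "i \<in> R a" "j \<in> C b"
  shows "rho A m n X Y = c a b / (rowsum A n i * colsum A m j)"
proof -
  have "finite X" "finite Y"
    using assms finite_subset proper_partition_subset[OF partR] proper_partition_subset[OF partC]
    by (metis finite_atLeastLessThan subset_trans)+
  then have "card X > 0" "card Y > 0" using assms by (simp_all add: card_gt_0_iff)
  have "VolR A n X = (\<Sum>i'\<in>X. rowsum A n i)"
    unfolding VolR_def using rowsum_eq[OF \<open>a < k\<close> _ \<open>i \<in> R a\<close>] assms(3) by (intro sum.cong) blast+
  moreover have "VolC A m Y = (\<Sum>j'\<in>Y. colsum A m j)"
    unfolding VolC_def using colsum_eq[OF \<open>b < k\<close> _ \<open>j \<in> C b\<close>] assms(5) by (intro sum.cong) blast+
  moreover have "aXY A X Y = (\<Sum>i\<in>X. \<Sum>j\<in>Y. c a b)"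
    unfolding aXY_def using entry_eq[OF \<open>a < k\<close> \<open>b < k\<close>] assms(3,5) by (intro sum.cong) blast+
  ultimately show ?thesis
    unfolding rho_def using \<open>card X > 0\<close> \<open>card Y > 0\<close> by simp
qed

lemma disc_part_block_partition_eq_0:
  assumes "k \<ge> 1"
  shows "disc_part A m n k R C = 0"
proof -
  define S where "S = {disc_pair A m n X Y (R a) (C b) | a b X Y.
            a < k \<and> b < k \<and> X \<subseteq> R a \<and> X \<noteq> {} \<and> Y \<subseteq> C b \<and> Y \<noteq> {}}"
  have "disc_pair A m n X Y (R a) (C b) = 0"
    if XY: "a < k" "b < k" "X \<subseteq> R a" "X \<noteq> {}" "Y \<subseteq> C b" "Y \<noteq> {}" for a b X Y
  proof -
    obtain i j where ij: "i \<in> R a" "j \<in> C b" using XY by blast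
    show ?thesis
      unfolding disc_pair_def
      using rho_in_block[OF XY ij] rho_in_block[OF XY(1,2) order_refl
          proper_partition_nonempty[OF partR XY(1)] order_refl proper_partition_nonempty[OF partC XY(2)] ij]
      by simp
  qed
  then have "S \<subseteq> {0}" unfolding S_def by blast
  moreover have "disc_pair A m n (R 0) (C 0) (R 0) (C 0) \<in> S"
    unfolding S_def using assms proper_partition_nonempty[OF partR] proper_partition_nonempty[OF partC]
    by (intro CollectI exI[of _ 0] exI[of _ "R 0"] exI[of _ "C 0"]) simp
  ultimately have "S = {0}" by (metis empty_iff subset_singletonD)
  then show ?thesis unfolding disc_part_def S_def[symmetric] by simp
qed

lemma table_rank_le_blocks: "table_rank A m n \<le> k"
proof -
  define M where "M = mat m n (\<lambda>(i, j). A i j)"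
  define rep where "rep b = (SOME j. j \<in> C b)" for b
  have "set (cols M) \<subseteq> (\<lambda>b. col M (rep b)) ` {..<k}"
  proof
    fix x assume "x \<in> set (cols M)"
    then obtain j where "j < n" "x = col M j" unfolding cols_def M_def by auto
    then obtain b where b: "b < k" "j \<in> C b" using proper_partition_covers[OF partC] by blast
    have "rep b \<in> C b" using b(2) unfolding rep_def by (rule someI)
    then have "rep b < n" using proper_partition_subset[OF partC, of b] by auto
    have "col M j = col M (rep b)"
    proof (rule eq_vecI)
      fix i assume "i < dim_vec (col M (rep b))"
      then have "i < m" unfolding M_def by simp
      then obtain a where "a < k" "i \<in> R a" using proper_partition_covers[OF partR] by blast
      then have "A i j = A i (rep b)"
        using entry_eq b \<open>rep b \<in> C b\<close> by metis
      then show "col M j $ i = col M (rep b) $ i"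
        using \<open>i < m\<close> \<open>j < n\<close> \<open>rep b < n\<close> unfolding M_def by simp
    qed (simp add: M_def)
    then show "x \<in> (\<lambda>b. col M (rep b)) ` {..<k}" using \<open>x = col M j\<close> b by auto
  qed
  then have "card (set (cols M)) \<le> card ((\<lambda>b. col M (rep b)) ` {..<k})"
    by (intro card_mono) auto
  also have "\<dots> \<le> k"
    using card_image_le[of "{..<k}" "\<lambda>b. col M (rep b)"] by simp
  finally have "card (set (cols M)) \<le> k" .
  moreover have "M \<in> carrier_mat m n" unfolding M_def by simp
  then have "vec_space.rank m M \<le> card (set (cols M))"
    by (rule vec_space.rank_le_card_cols)
  ultimately show ?thesis
    unfolding table_rank_def M_def[symmetric] by linarith
qed

end

theorem mainTheorem5:
  fixes A :: "nat \<Rightarrow> nat \<Rightarrow> real" and m n k :: nat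
    and R C :: "nat \<Rightarrow> nat set" and c :: "nat \<Rightarrow> nat \<Rightarrow> real"
  assumes nonneg: "\<forall>i<m. \<forall>j<n. A i j \<ge> 0"
    and total: "(\<Sum>i<m. \<Sum>j<n. A i j) = 1"
    and nondec: "non_decomposable A m n"
    and k_pos: "k \<ge> 1"
    and partR: "proper_partition m k R"
    and partC: "proper_partition n k C"
    and c_pos: "\<forall>a<k. \<forall>b<k. c a b > 0"
    and block: "\<forall>a<k. \<forall>b<k. \<forall>i\<in>R a. \<forall>j\<in>C b. A i j = c a b"
  shows "disc_l k A m n = 0 \<and>
         (\<forall>l. k \<le> l \<and> l \<le> table_rank A m n \<longrightarrow> disc_l l A m n = 0)"
proof -
  interpret block_table A m n k R C c
    using partR partC block by unfold_locales
  have disc_k: "disc_l k A m n = 0"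
    using disc_l_eq_0I[OF partR partC k_pos disc_part_block_partition_eq_0[OF k_pos] nonneg] .
  moreover have "\<forall>l. k \<le> l \<and> l \<le> table_rank A m n \<longrightarrow> l = k"
    using table_rank_le_blocks by auto
  ultimately show ?thesis by auto
qed

end
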